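(* Let $f_0(1)=f_0(2)=1$ and $f_0(n)=0$ for $n\ge3$. Then for every $m\ge1$ and $1\le k\le n$, $c_m(n,k)$ equals the number of words of length $n-1$ over the alphabet $\{0,1,\ldots,m\}$ which have exactly $k-1$ letters equal to $m$ and in which all zeros are isolated (no two zeros are adjacent). Also, $c_1(n,k)=\binom{k}{n-k}$ for $1\le k\le n$, and for $m>1$ and $\lceil n/2\rceil\ge k\ge1$, \[c_m(n,k)=\sum_{j=\lceil\frac{n}{2}\rceil-k}^{n-k}(m-1)^{j}\binom{j+k-1}{k-1}\binom{j+k}{n-j-k}.\]
   Context: For $m\ge 1$, $f_m$ is the invert transform of $f_{m-1}$, i.e. $f_m(n)=f_{m-1}(n)+\sum_{i=1}^{n-1}f_{m-1}(i)f_m(n-i)$ for $n\ge1$. For $m\ge1$ the numbers $c_m(n,k)$, $0\le k\le n$, are defined by $c_m(0,0)=1$, $c_m(n,0)=0$ for $n\ge1$, and $c_m(n,k)=\sum_{i=1}^{n-k+1}f_{m-1}(i)\,c_m(n-i,k-1)$ for $1\le k\le n$. Words may be empty; $\binom{a}{b}=0$ when $b>a$ or $b<0$. *)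

theory Defs
  imports "HOL-Analysis.Analysis"
begin

text \<open>f_0(1) = f_0(2) = 1, f_0(n) = 0 otherwise; f_m is the invert transform of f_(m-1).
  The value at 0 is an irrelevant convention (set to 0).\<close>
function finv :: "nat \<Rightarrow> nat \<Rightarrow> nat" where
  "finv 0 n = (if n = 1 \<or> n = 2 then 1 else 0)"
| "finv (Suc m) n = (if n = 0 then 0 else
      finv m n + (\<Sum>i\<in>{1..<n}. finv m i * finv (Suc m) (n - i)))"
  by pat_completeness auto
termination
  by (relation "measures [fst, snd]") auto

fun cmat :: "(nat \<Rightarrow> nat) \<Rightarrow> nat \<Rightarrow> nat \<Rightarrow> nat" where
  "cmat f n 0 = (if n = 0 then 1 else 0)"
| "cmat f n (Suc k) = (if Suc k \<le> n then (\<Sum>i\<in>{1..n - k}. f i * cmat f (n - i) k) else 0)"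

definition c :: "nat \<Rightarrow> nat \<Rightarrow> nat \<Rightarrow> nat" where
  "c m n k = cmat (finv (m - 1)) n k"

definition good_words :: "nat \<Rightarrow> nat \<Rightarrow> nat \<Rightarrow> nat list set" where
  "good_words m l j = {w. length w = l \<and> set w \<subseteq> {0..m}
      \<and> length (filter (\<lambda>x. x = m) w) = j
      \<and> (\<forall>i. Suc i < length w \<longrightarrow> \<not> (w ! i = 0 \<and> w ! Suc i = 0))}"

end

theory Submission
  imports Defs "HOL-Computational_Algebra.Formal_Power_Series"
begin

unbundle no vec_syntax
unbundle fps_syntax

text \<open>Cutting a word over \<open>{0..m}\<close> at the first occurrence of its largest letter \<open>m\<close> splits
  it into a word over \<open>{0..m-1}\<close> and an arbitrary word; since \<open>m \<noteq> 0\<close> sits between them, zeros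
  are isolated in the whole word iff they are in both parts. Counting by the position of the cut
  turns both the invert transform defining \<open>f\<^sub>m\<close> and the convolution defining \<open>c\<^sub>m\<close> into
  such decompositions, \<open>f\<^sub>m\<^sub>-\<^sub>1(i)\<close> counting the admissible prefixes of length \<open>i - 1\<close>.

  For the closed form, the invert transform gives \<open>F\<^sub>a = P / (1 - a P)\<close> for the generating
  function of \<open>f\<^sub>a\<close>, where \<open>P = x + x\<^sup>2\<close>. Hence \<open>F\<^sub>a\<^sup>k\<close> is \<open>x\<^sup>k (1 - a x)\<^sup>-\<^sup>k\<close>
  composed with \<open>P\<close>, and expanding the negative binomial series and \<open>P\<^sup>i = x\<^sup>i (1 + x)\<^sup>i\<close>
  gives the sum; its terms with \<open>2 (j + k) < n\<close> vanish.\<close>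

text \<open>The equation for \<open>finv (Suc m) n\<close> unfolds forever on a symbolic \<open>n\<close>, so it is only
  used explicitly.\<close>
declare finv.simps [simp del]

lemma finv_at_0 [simp]: "finv m 0 = 0"
  by (cases m) (simp_all add: finv.simps)

lemma finv_Suc: "0 < n \<Longrightarrow> finv (Suc m) n = finv m n + (\<Sum>i\<in>{1..<n}. finv m i * finv (Suc m) (n - i))"
  by (subst finv.simps) simp

section \<open>Words with isolated zeros\<close>

lemma successively_append_Cons_separator:
  assumes "\<And>x. P x a \<and> P a x"
  shows "successively P (xs @ a # ys) \<longleftrightarrow> successively P xs \<and> successively P ys"
  using assms by (auto simp: successively_append_iff successively_Cons)

lemma append_Cons_eq_first_occurrence:
  "m \<notin> set p \<Longrightarrow> m \<notin> set p' \<Longrightarrow> p @ m # s = p' @ m # s' \<Longrightarrow> p = p' \<and> s = s'"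
proof (induction p arbitrary: p')
  case Nil then show ?case by (cases p') auto
next
  case (Cons x p) then show ?case by (cases p') auto
qed

definition isolated_words :: "nat \<Rightarrow> nat \<Rightarrow> (nat \<Rightarrow> bool) \<Rightarrow> nat list set" where
  "isolated_words m l P = {w. length w = l \<and> set w \<subseteq> {0..m}
      \<and> P (count_list w m) \<and> successively (\<lambda>x y. x \<noteq> 0 \<or> y \<noteq> 0) w}"

lemma good_words_eq_isolated_words: "good_words m l j = isolated_words m l (\<lambda>c. c = j)"
proof -
  have "length (filter (\<lambda>x. x = m) w) = count_list w m" for w
    by (induction w) auto
  then show ?thesis
    by (auto simp: good_words_def isolated_words_def successively_conv_nth)
qed

lemma finite_isolated_words: "finite (isolated_words m l P)"
  by (rule finite_subset[OF _ finite_lists_length_eq[OF finite_atLeastAtMost[of 0 m], of l]])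
     (auto simp: isolated_words_def)

lemma finite_good_words: "finite (good_words m l j)"
  by (simp add: good_words_eq_isolated_words finite_isolated_words)

lemma good_words_empty: "l < j \<Longrightarrow> good_words m l j = {}"
  using count_le_length[of _ m] by (auto simp: good_words_eq_isolated_words isolated_words_def)
    (metis not_le)

lemma good_words_0_iff: "w \<in> good_words m l 0 \<longleftrightarrow> w \<in> isolated_words m l (\<lambda>_. True) \<and> m \<notin> set w"
  by (auto simp: good_words_eq_isolated_words isolated_words_def count_list_0_iff)

lemma good_words_Suc_0: "good_words (Suc m) l 0 = isolated_words m l (\<lambda>_. True)"
  by (auto simp: good_words_eq_isolated_words isolated_words_def count_list_0_iff
      subset_iff le_Suc_eq)

lemma bij_betw_split_first_top_letter:
  assumes "0 < m"
  shows "bij_betw (\<lambda>(i, p, s). p @ m # s)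
           (SIGMA i:{1..l}. good_words m (i - 1) 0 \<times> isolated_words m (l - i) (P \<circ> Suc))
           {w \<in> isolated_words m l P. m \<in> set w}"
proof (rule bij_betw_imageI)
  show "inj_on (\<lambda>(i, p, s). p @ m # s)
          (SIGMA i:{1..l}. good_words m (i - 1) 0 \<times> isolated_words m (l - i) (P \<circ> Suc))"
  proof (rule inj_onI, clarsimp)
    fix i p s j p' s'
    assume eq: "p @ m # s = p' @ m # s'" and p: "p \<in> good_words m (i - Suc 0) 0"
      and p': "p' \<in> good_words m (j - Suc 0) 0" and "Suc 0 \<le> i" "Suc 0 \<le> j"
    have "p = p' \<and> s = s'"
      using p p' by (intro append_Cons_eq_first_occurrence[OF _ _ eq]) (auto simp: good_words_0_iff)
    moreover have "length p = i - 1" "length p' = j - 1"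
      using p p' by (auto simp: good_words_def)
    ultimately show "i = j \<and> p = p' \<and> s = s'"
      using \<open>Suc 0 \<le> i\<close> \<open>Suc 0 \<le> j\<close> by auto
  qed
  show "(\<lambda>(i, p, s). p @ m # s) `
          (SIGMA i:{1..l}. good_words m (i - 1) 0 \<times> isolated_words m (l - i) (P \<circ> Suc))
        = {w \<in> isolated_words m l P. m \<in> set w}"
  proof (intro equalityI subsetI)
    fix w assume "w \<in> (\<lambda>(i, p, s). p @ m # s) `
          (SIGMA i:{1..l}. good_words m (i - 1) 0 \<times> isolated_words m (l - i) (P \<circ> Suc))"
    then show "w \<in> {w \<in> isolated_words m l P. m \<in> set w}"
      using assms by (auto simp: good_words_0_iff isolated_words_def
          successively_append_Cons_separator subset_iff)
  next
    fix w assume w: "w \<in> {w \<in> isolated_words m l P. m \<in> set w}"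
    then obtain p s where ps: "w = p @ m # s" "m \<notin> set p"
      using split_list_first[of m w] by auto
    then show "w \<in> (\<lambda>(i, p, s). p @ m # s) `
          (SIGMA i:{1..l}. good_words m (i - 1) 0 \<times> isolated_words m (l - i) (P \<circ> Suc))"
      using w assms
      by (intro image_eqI[where x = "(Suc (length p), p, s)"])
         (auto simp: good_words_0_iff isolated_words_def successively_append_Cons_separator)
  qed
qed

lemma card_isolated_words_containing_top:
  assumes "0 < m"
  shows "card {w \<in> isolated_words m l P. m \<in> set w} =
    (\<Sum>i\<in>{1..l}. card (good_words m (i - 1) 0) * card (isolated_words m (l - i) (P \<circ> Suc)))"
  by (simp add: bij_betw_same_card[OF bij_betw_split_first_top_letter[OF assms], symmetric]
      finite_good_words finite_isolated_words card_cartesian_product)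

lemma card_good_words_Suc:
  assumes "0 < m"
  shows "card (good_words m l (Suc j)) =
    (\<Sum>i\<in>{1..l}. card (good_words m (i - 1) 0) * card (good_words m (l - i) j))"
proof -
  have "card (good_words m l (Suc j)) =
      card {w \<in> isolated_words m l (\<lambda>c. c = Suc j). m \<in> set w}"
    by (rule arg_cong[where f = card])
      (auto simp: good_words_eq_isolated_words isolated_words_def, metis count_notin Zero_not_Suc)
  then show ?thesis
    by (simp add: card_isolated_words_containing_top[OF assms] good_words_eq_isolated_words o_def)
qed

lemma card_good_words_Suc_alphabet:
  assumes "0 < m"
  shows "card (good_words (Suc m) l 0) = card (good_words m l 0) +
    (\<Sum>i\<in>{1..l}. card (good_words m (i - 1) 0) * card (good_words (Suc m) (l - i) 0))"
proof -
  have "good_words (Suc m) l 0 = good_words m l 0 \<union> {w \<in> isolated_words m l (\<lambda>_. True). m \<in> set w}"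
    and "good_words m l 0 \<inter> {w \<in> isolated_words m l (\<lambda>_. True). m \<in> set w} = {}"
    by (auto simp: good_words_Suc_0 good_words_0_iff)
  then have "card (good_words (Suc m) l 0) =
      card (good_words m l 0) + card {w \<in> isolated_words m l (\<lambda>_. True). m \<in> set w}"
    by (simp add: card_Un_disjoint finite_good_words finite_isolated_words)
  then show ?thesis
    by (simp add: card_isolated_words_containing_top[OF assms] good_words_Suc_0 o_def)
qed

lemma card_good_words_1_0: "card (good_words (Suc 0) l 0) = (if l \<le> 1 then 1 else 0)"
proof -
  have "good_words (Suc 0) l 0 = (if l \<le> 1 then {replicate l 0} else {})"
  proof (cases "l \<le> 1")
    case True
    then show ?thesis
      by (auto simp: good_words_Suc_0 isolated_words_def le_Suc_eq length_Suc_conv)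
  next
    case False
    then have "\<not> successively (\<lambda>x y. x \<noteq> 0 \<or> y \<noteq> 0) w"
      if "length w = l" "set w \<subseteq> {0 :: nat}" for w
      using that by (cases w rule: remdups_adj.cases) auto
    with False show ?thesis
      by (auto simp: good_words_Suc_0 isolated_words_def)
  qed
  then show ?thesis by simp
qed

lemma finv_eq_card_good_words: "0 < n \<Longrightarrow> finv m n = card (good_words (Suc m) (n - 1) 0)"
proof (induction m arbitrary: n)
  case 0
  then show ?case by (auto simp: finv.simps card_good_words_1_0)
next
  case (Suc m)
  from Suc.prems show ?case
  proof (induction n rule: less_induct)
    case (less n)
    have "finv (Suc m) n = finv m n + (\<Sum>i\<in>{1..n - 1}. finv m i * finv (Suc m) (n - i))"
      using less.prems by (subst finv_Suc) (simp_all add: atLeastLessThanSuc_atLeastAtMost[symmetric])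
    also have "\<dots> = card (good_words (Suc m) (n - 1) 0) + (\<Sum>i\<in>{1..n - 1}.
        card (good_words (Suc m) (i - 1) 0) * card (good_words (Suc (Suc m)) (n - 1 - i) 0))"
    proof -
      have "finv (Suc m) (n - i) = card (good_words (Suc (Suc m)) (n - 1 - i) 0)"
        if "i \<in> {1..n - 1}" for i
      proof -
        have "n - i < n" "0 < n - i"
          using that less.prems by auto
        then show ?thesis
          using less.IH[of "n - i"] by (simp add: diff_commute)
      qed
      then show ?thesis
        using less.prems by (simp add: Suc.IH)
    qed
    also have "\<dots> = card (good_words (Suc (Suc m)) (n - 1) 0)"
      by (rule card_good_words_Suc_alphabet[symmetric]) simp
    finally show ?case .
  qed
qed

lemma cmat_Suc_0: "0 < n \<Longrightarrow> cmat f n (Suc 0) = f n"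
proof -
  assume "0 < n"
  then have "cmat f n (Suc 0) = (\<Sum>i\<in>{1..n}. f i * (if n \<le> i then 1 else 0))"
    by simp
  also have "\<dots> = (\<Sum>i\<in>{1..n}. if i = n then f i else 0)"
    by (rule sum.cong) auto
  finally show ?thesis
    using \<open>0 < n\<close> by simp
qed

lemma cmat_finv_eq_card_good_words:
  assumes "0 < m" "0 < n"
  shows "cmat (finv (m - 1)) n (Suc j) = card (good_words m (n - 1) j)"
  using assms(2)
proof (induction j arbitrary: n)
  case 0
  then show ?case
    using assms(1) by (simp add: cmat_Suc_0 finv_eq_card_good_words del: cmat.simps)
next
  case (Suc j)
  show ?case
  proof (cases "Suc (Suc j) \<le> n")
    case True
    have "cmat (finv (m - 1)) n (Suc (Suc j)) =
        (\<Sum>i\<in>{1..n - Suc j}. card (good_words m (i - 1) 0) * card (good_words m (n - 1 - i) j))"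
    proof -
      have "cmat (finv (m - 1)) (n - i) (Suc j) = card (good_words m (n - 1 - i) j)"
        if "i \<in> {1..n - Suc j}" for i
      proof -
        have "0 < n - i"
          using that True by auto
        then show ?thesis
          using Suc.IH[of "n - i"] by (simp add: diff_commute del: cmat.simps)
      qed
      then show ?thesis
        using True assms(1) by (subst cmat.simps) (simp add: finv_eq_card_good_words del: cmat.simps)
    qed
    also have "\<dots> = (\<Sum>i\<in>{1..n - 1}. card (good_words m (i - 1) 0) * card (good_words m (n - 1 - i) j))"
      by (rule sum.mono_neutral_left) (auto simp: good_words_empty)
    also have "\<dots> = card (good_words m (n - 1) (Suc j))"
      by (rule card_good_words_Suc[symmetric]) (rule assms(1))
    finally show ?thesis .
  next
    case False
    then show ?thesis by (simp add: good_words_empty)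
  qed
qed

section \<open>Generating functions\<close>

lemma cmat_eq_0: "n < k \<Longrightarrow> cmat f n k = 0"
  by (cases k) auto

lemma fps_power_nth_cmat:
  assumes "f 0 = 0"
  shows "Abs_fps (\<lambda>n. of_nat (f n) :: 'a :: comm_semiring_1) ^ k $ n = of_nat (cmat f n k)"
proof (induction k arbitrary: n)
  case 0
  then show ?case by simp
next
  case (Suc k)
  have "Abs_fps (\<lambda>n. of_nat (f n) :: 'a) ^ Suc k $ n = (\<Sum>i=0..n. of_nat (f i * cmat f (n - i) k))"
    by (simp add: fps_mult_nth Suc.IH)
  also have "\<dots> = (\<Sum>i\<in>{1..n - k}. of_nat (f i * cmat f (n - i) k))"
    by (rule sum.mono_neutral_right) (use assms in \<open>auto simp: cmat_eq_0 not_less_eq_eq\<close>)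
  also have "\<dots> = of_nat (cmat f n (Suc k))"
    by auto
  finally show ?case .
qed

definition finv_fps :: "nat \<Rightarrow> int fps" where
  "finv_fps m = Abs_fps (\<lambda>n. int (finv m n))"

lemma finv_fps_0: "finv_fps 0 = fps_X + fps_X ^ 2"
  by (rule fps_ext) (simp add: finv_fps_def finv.simps)

lemma finv_fps_Suc: "finv_fps (Suc m) = finv_fps m + finv_fps m * finv_fps (Suc m)"
proof (rule fps_ext)
  fix n
  show "finv_fps (Suc m) $ n = (finv_fps m + finv_fps m * finv_fps (Suc m)) $ n"
  proof (cases "n = 0")
    case False
    then have "finv_fps (Suc m) $ n =
        int (finv m n) + (\<Sum>i\<in>{1..<n}. int (finv m i) * int (finv (Suc m) (n - i)))"
      by (simp add: finv_fps_def) (subst finv_Suc, simp_all)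
    moreover have "{0..n} = insert 0 (insert n {1..<n})"
      using False by auto
    ultimately show ?thesis
      using False by (simp add: fps_mult_nth finv_fps_def)
  qed (simp add: finv_fps_def)
qed

lemma finv_fps_mult_eq: "finv_fps m * (1 - of_nat m * (fps_X + fps_X ^ 2)) = fps_X + fps_X ^ 2"
proof (induction m)
  case 0
  then show ?case by (simp add: finv_fps_0)
next
  case (Suc m)
  let ?P = "fps_X + fps_X ^ 2 :: int fps" and ?F = "finv_fps m" and ?F' = "finv_fps (Suc m)"
  have "?F' * (1 - of_nat (Suc m) * ?P) = ?F' * (1 - of_nat m * ?P) - ?F' * ?P"
    by (simp add: algebra_simps)
  also have "\<dots> = (1 - of_nat m * ?P) * (?F' - ?F * ?F')"
    by (subst (2) Suc.IH[symmetric]) (simp add: algebra_simps)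
  also have "?F' - ?F * ?F' = ?F"
    using finv_fps_Suc[of m] by (simp add: algebra_simps)
  finally show ?case
    using Suc.IH by (simp add: mult.commute)
qed

lemma one_plus_fps_X_power_nth: "(1 + fps_X :: 'a :: comm_semiring_1 fps) ^ r $ i = of_nat (r choose i)"
proof (induction r arbitrary: i)
  case (Suc r)
  have "(1 + fps_X :: 'a fps) ^ Suc r = (1 + fps_X) ^ r + fps_X * (1 + fps_X) ^ r"
    by (simp add: algebra_simps)
  then show ?case
    using Suc by (cases i) (simp_all add: distrib_right add.commute)
qed (simp add: binomial_eq_0)

lemma fps_X_plus_X2_power_nth:
  "(fps_X + fps_X ^ 2 :: 'a :: comm_semiring_1 fps) ^ r $ n = (if r \<le> n then of_nat (r choose (n - r)) else 0)"
proof -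
  have "(fps_X + fps_X ^ 2 :: 'a fps) ^ r = fps_X ^ r * (1 + fps_X) ^ r"
    by (simp add: power2_eq_square algebra_simps flip: power_mult_distrib)
  then show ?thesis
    by (simp add: fps_X_power_mult_nth one_plus_fps_X_power_nth)
qed

lemma fps_geometric_power_nth:
  "Abs_fps (\<lambda>j. a ^ j) ^ k $ j = (a :: 'a :: comm_semiring_1) ^ j * of_nat ((j + k - 1) choose j)"
proof (induction k arbitrary: j)
  case 0
  then show ?case by (cases j) (simp_all add: binomial_eq_0)
next
  case (Suc k)
  have "Abs_fps (\<lambda>j. a ^ j) ^ Suc k $ j = a ^ j * (\<Sum>i=0..j. of_nat ((j - i + k - 1) choose (j - i)))"
    by (auto simp: fps_mult_nth Suc.IH sum_distrib_left mult.assoc[symmetric]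
        simp flip: power_add intro!: sum.cong)
  also have "(\<Sum>i=0..j. of_nat ((j - i + k - 1) choose (j - i))) = (\<Sum>i=0..j. of_nat ((i + k - 1) choose i) :: 'a)"
    by (subst sum.atLeastAtMost_rev) simp
  also have "\<dots> = of_nat (j + Suc k - 1 choose j)"
  proof (cases k)
    case 0
    then have "(\<Sum>i=0..j. of_nat ((i + k - 1) choose i)) = (\<Sum>i=0..j. if i = 0 then 1 else 0 :: 'a)"
      by (intro sum.cong) (auto simp: binomial_eq_0)
    then show ?thesis
      using 0 by simp
  next
    case (Suc r)
    then show ?thesis
      using sum_choose_lower[of r j] by (simp add: atLeast0AtMost add.commute flip: of_nat_sum)
  qed
  finally show ?case .
qed

lemma fps_geometric_mult_eq: "Abs_fps (\<lambda>j. a ^ j) * (1 - fps_const a * fps_X) = (1 :: 'a :: comm_ring_1 fps)"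
proof (rule fps_ext)
  fix n
  show "(Abs_fps (\<lambda>j. a ^ j) * (1 - fps_const a * fps_X)) $ n = (1 :: 'a fps) $ n"
    by (cases n) (simp_all add: algebra_simps)
qed

lemma finv_fps_eq_compose:
  "finv_fps a = (fps_X * Abs_fps (\<lambda>j. int a ^ j)) oo (fps_X + fps_X ^ 2)"
proof -
  let ?P = "fps_X + fps_X ^ 2 :: int fps" and ?Q = "1 - of_nat a * (fps_X + fps_X ^ 2) :: int fps"
  have "?Q = (1 - fps_const (int a) * fps_X) oo ?P"
    by (simp add: fps_compose_sub_distrib fps_compose_mult_distrib fps_of_nat flip: fps_of_nat)
  then have "((fps_X * Abs_fps (\<lambda>j. int a ^ j)) oo ?P) * ?Q =
      (fps_X * (Abs_fps (\<lambda>j. int a ^ j) * (1 - fps_const (int a) * fps_X))) oo ?P"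
    by (simp add: fps_compose_mult_distrib mult.assoc)
  also have "\<dots> = finv_fps a * ?Q"
    by (simp add: fps_geometric_mult_eq finv_fps_mult_eq)
  finally have "((fps_X * Abs_fps (\<lambda>j. int a ^ j)) oo ?P) * ?Q = finv_fps a * ?Q" .
  moreover have "?Q $ 0 \<noteq> 0"
    by simp
  ultimately show ?thesis
    by (metis mult_cancel_right fps_nonzero_nth)
qed

lemma finv_fps_power_nth:
  assumes "k \<le> n"
  shows "finv_fps a ^ k $ n =
    (\<Sum>j=0..n - k. int (a ^ j * ((j + k - 1) choose j) * ((j + k) choose (n - j - k))))"
proof -
  let ?G = "Abs_fps (\<lambda>j. int a ^ j)"
  have "finv_fps a ^ k = (fps_X ^ k * ?G ^ k) oo (fps_X + fps_X ^ 2)"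
    by (simp add: finv_fps_eq_compose fps_compose_power power_mult_distrib)
  then have "finv_fps a ^ k $ n =
      (\<Sum>i=0..n. (if i < k then 0 else ?G ^ k $ (i - k)) * (fps_X + fps_X ^ 2) ^ i $ n)"
    by (simp add: fps_compose_nth fps_X_power_mult_nth)
  also have "\<dots> = (\<Sum>i=k..n. ?G ^ k $ (i - k) * (fps_X + fps_X ^ 2) ^ i $ n)"
    by (rule sum.mono_neutral_cong_right) (use assms in auto)
  also have "\<dots> = (\<Sum>j=0..n - k. ?G ^ k $ j * (fps_X + fps_X ^ 2) ^ (j + k) $ n)"
    using sum.shift_bounds_cl_nat_ivl[of "\<lambda>i. ?G ^ k $ (i - k) * (fps_X + fps_X ^ 2) ^ i $ n" 0 k "n - k"]
      assms by simp
  also have "\<dots> = (\<Sum>j=0..n - k. int (a ^ j * ((j + k - 1) choose j) * ((j + k) choose (n - j - k))))"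
    by (rule sum.cong) (use assms in \<open>auto simp: fps_geometric_power_nth fps_X_plus_X2_power_nth\<close>)
  finally show ?thesis .
qed

lemma cmat_finv_closed_form:
  assumes "1 \<le> k" "k \<le> n"
  shows "cmat (finv a) n k =
    (\<Sum>j=0..n - k. a ^ j * ((j + k - 1) choose (k - 1)) * ((j + k) choose (n - j - k)))"
proof -
  have choose_sym: "(j + k - 1) choose j = (j + k - 1) choose (k - 1)" for j
    using assms by (subst binomial_symmetric) auto
  have "int (cmat (finv a) n k) = finv_fps a ^ k $ n"
    by (simp add: finv_fps_def fps_power_nth_cmat)
  also have "\<dots> = int (\<Sum>j=0..n - k. a ^ j * ((j + k - 1) choose (k - 1)) * ((j + k) choose (n - j - k)))"
    unfolding finv_fps_power_nth[OF assms(2)] choose_sym by simp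
  finally show ?thesis
    by (simp only: of_nat_eq_iff)
qed

lemma cmat_finv_0: "k \<le> n \<Longrightarrow> cmat (finv 0) n k = k choose (n - k)"
proof -
  assume "k \<le> n"
  have "int (cmat (finv 0) n k) = finv_fps 0 ^ k $ n"
    by (simp add: finv_fps_def fps_power_nth_cmat)
  then show ?thesis
    using \<open>k \<le> n\<close> by (simp add: finv_fps_0 fps_X_plus_X2_power_nth)
qed

lemma cmat_finv_closed_form_from_half:
  assumes "1 \<le> k" "k \<le> n"
  shows "cmat (finv a) n k = (\<Sum>j\<in>{(n + 1) div 2 - k..n - k}.
    a ^ j * ((j + k - 1) choose (k - 1)) * ((j + k) choose (n - j - k)))"
  unfolding cmat_finv_closed_form[OF assms]
proof (rule sum.mono_neutral_right)
  show "\<forall>j\<in>{0..n - k} - {(n + 1) div 2 - k..n - k}.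
      a ^ j * ((j + k - 1) choose (k - 1)) * ((j + k) choose (n - j - k)) = 0"
    by (auto simp: binomial_eq_0)
qed auto

lemma ceiling_half: "\<lceil>real n / 2\<rceil> = int ((n + 1) div 2)"
proof (rule ceiling_unique)
  show "real_of_int (int ((n + 1) div 2)) - 1 < real n / 2"
    and "real n / 2 \<le> real_of_int (int ((n + 1) div 2))"
    by (cases "even n"; auto elim!: evenE oddE simp: field_simps)+
qed

theorem corollary20:
  shows "(\<forall>m n k. 1 \<le> m \<longrightarrow> 1 \<le> k \<longrightarrow> k \<le> n \<longrightarrow>
            c m n k = card (good_words m (n - 1) (k - 1)))
       \<and> (\<forall>n k. 1 \<le> k \<longrightarrow> k \<le> n \<longrightarrow> c 1 n k = k choose (n - k))
       \<and> (\<forall>m n k. 1 < m \<longrightarrow> 1 \<le> k \<longrightarrow> int k \<le> \<lceil>real n / 2\<rceil> \<longrightarrow>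
            c m n k = (\<Sum>j \<in> {nat (\<lceil>real n / 2\<rceil> - int k)..n - k}.
               (m - 1) ^ j * ((j + k - 1) choose (k - 1)) * ((j + k) choose (n - j - k))))"
proof (intro conjI allI impI)
  fix m n k :: nat
  assume "1 \<le> m" "1 \<le> k" "k \<le> n"
  then show "c m n k = card (good_words m (n - 1) (k - 1))"
    using cmat_finv_eq_card_good_words[of m n "k - 1"] by (simp add: c_def)
next
  fix n k :: nat
  assume "1 \<le> k" "k \<le> n"
  then show "c 1 n k = k choose (n - k)"
    by (simp add: c_def cmat_finv_0)
next
  fix m n k :: nat
  assume "1 \<le> k" "int k \<le> \<lceil>real n / 2\<rceil>"
  then have "k \<le> n" and "nat (\<lceil>real n / 2\<rceil> - int k) = (n + 1) div 2 - k"
    by (simp_all add: ceiling_half)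
  then show "c m n k = (\<Sum>j \<in> {nat (\<lceil>real n / 2\<rceil> - int k)..n - k}.
      (m - 1) ^ j * ((j + k - 1) choose (k - 1)) * ((j + k) choose (n - j - k)))"
    using \<open>1 \<le> k\<close> by (simp add: c_def cmat_finv_closed_form_from_half)
qed

end
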